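(* For any positive integer $n$, there exists a finite graph $G_n$ such that the canonical semi-ring $R(G_n)=\bigoplus_{m=0}^\infty R(G_n, mK_{G_n})$ is not generated in degree at most $n-1$, i.e. it is not generated as a graded semi-ring over ${\mathbb{Z}}^{\mathrm{trop}}$ by elements of $\bigoplus_{m=0}^{n-1}R(G_n,mK_{G_n})$.
   Context: A finite graph $G$ is connected, loops and multiple edges allowed. A divisor is $D=\sum_{x\in V(G)}D(x)[x]$, $D(x)\in{\mathbb{Z}}$; effective if all $D(x)\ge0$. A rational function is $f:V(G)\to{\mathbb{Z}}$; $\mathrm{ord}_x(f)=\sum_{e=\overline{xy}\in E(G)}(f(y)-f(x))$, $\mathrm{div}(f)=\sum_x\mathrm{ord}_x(f)[x]$. $R(G,D)=\{f: D+\mathrm{div}(f)\ge0\}$. $K_G=\sum_x(\mathrm{val}(x)-2)[x]$. The direct sum $\bigoplus_m R(G,mK_G)$ is a graded semi-ring over ${\mathbb{Z}}^{\mathrm{trop}}=({\mathbb{Z}},\max,+)$ with sum $\max$ in each degree, action $c\odot f=c+f$, product $f\odot g=f+g$ (degrees add). A set $S$ of homogeneous elements generates it if every homogeneous element is a finite tropical sum of ${\mathbb{Z}}^{\mathrm{trop}}$-multiples of tropical products of elements of $S$. *)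

theory Defs
  imports Main
begin

(* A finite connected multigraph (loops and multiple edges allowed) on a vertex
   set V :: nat set.  mult x y = number of edges joining x and y (x \<noteq> y);
   mult x x = number of loops at x. *)
definition fin_conn_graph :: "nat set \<Rightarrow> (nat \<Rightarrow> nat \<Rightarrow> nat) \<Rightarrow> bool" where
  "fin_conn_graph V mult \<longleftrightarrow>
     finite V \<and> V \<noteq> {} \<and>
     (\<forall>x y. mult x y = mult y x) \<and>
     (\<forall>x y. mult x y > 0 \<longrightarrow> x \<in> V \<and> y \<in> V) \<and>
     (\<forall>x\<in>V. \<forall>y\<in>V. (x, y) \<in> {(a, b). mult a b > 0}\<^sup>*)"

definition val :: "nat set \<Rightarrow> (nat \<Rightarrow> nat \<Rightarrow> nat) \<Rightarrow> nat \<Rightarrow> int" where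
  "val V mult x = (\<Sum>y\<in>V - {x}. int (mult x y)) + 2 * int (mult x x)"

definition ord :: "nat set \<Rightarrow> (nat \<Rightarrow> nat \<Rightarrow> nat) \<Rightarrow> (nat \<Rightarrow> int) \<Rightarrow> nat \<Rightarrow> int" where
  "ord V mult f x = (\<Sum>y\<in>V. int (mult x y) * (f y - f x))"

definition canon :: "nat set \<Rightarrow> (nat \<Rightarrow> nat \<Rightarrow> nat) \<Rightarrow> nat \<Rightarrow> int" where
  "canon V mult x = val V mult x - 2"

(* R(G, D): rational functions f with D + div f effective (only values on V matter) *)
definition RR :: "nat set \<Rightarrow> (nat \<Rightarrow> nat \<Rightarrow> nat) \<Rightarrow> (nat \<Rightarrow> int) \<Rightarrow> (nat \<Rightarrow> int) set" where
  "RR V mult D = {f. \<forall>x\<in>V. D x + ord V mult f x \<ge> 0}"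

definition RK :: "nat set \<Rightarrow> (nat \<Rightarrow> nat \<Rightarrow> nat) \<Rightarrow> nat \<Rightarrow> (nat \<Rightarrow> int) set" where
  "RK V mult m = RR V mult (\<lambda>x. int m * canon V mult x)"

(* homogeneous elements of the canonical semi-ring: pairs (degree, function) *)
definition homog :: "nat set \<Rightarrow> (nat \<Rightarrow> nat \<Rightarrow> nat) \<Rightarrow> (nat \<times> (nat \<Rightarrow> int)) set" where
  "homog V mult = {(m, f). f \<in> RK V mult m}"

(* S generates: every homogeneous element of degree m is (on V) a finite nonempty
   tropical sum (max) of terms c \<odot> (g_1 \<odot> ... \<odot> g_k) with c \<in> \<int> and g_j \<in> S,
   where the degrees of the g_j add up to m. *)
definition generates :: "nat set \<Rightarrow> (nat \<Rightarrow> nat \<Rightarrow> nat) \<Rightarrow> (nat \<times> (nat \<Rightarrow> int)) set \<Rightarrow> bool" where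
  "generates V mult S \<longleftrightarrow>
     S \<subseteq> homog V mult \<and>
     (\<forall>m h. h \<in> RK V mult m \<longrightarrow>
        (\<exists>ts :: (int \<times> (nat \<times> (nat \<Rightarrow> int)) list) list.
            ts \<noteq> [] \<and>
            (\<forall>t\<in>set ts. set (snd t) \<subseteq> S \<and> sum_list (map fst (snd t)) = m) \<and>
            (\<forall>x\<in>V. h x = Max ((\<lambda>t. fst t + sum_list (map (\<lambda>g. snd g x) (snd t))) ` set ts))))"

end

theory Submission
  imports Defs
begin

text \<open>Take the banana graph with two vertices joined by 2n edges, so K = (2n-2)([0] + [1]).
  An element of R(G, mK) is determined up to a constant by its slope d = f(1) - f(0), subject
  only to n|d| \<le> (n-1)m. The linear functional (n-1)d - (n-2)m is additive under tropical
  products and nonpositive in every degree m \<le> n-1 (for m \<ge> 1 the constraint forces d \<le> m-1), but it is 1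
  on the function of degree n and slope n-1. A tropical sum taking the value of that function
  contains a monomial whose slope is at least n-1, which is impossible.\<close>

definition banana :: "nat \<Rightarrow> nat \<Rightarrow> nat \<Rightarrow> nat" where
  "banana k x y = (if (x = 0 \<and> y = 1) \<or> (x = 1 \<and> y = 0) then k else 0)"

lemma fin_conn_graph_banana:
  assumes "k \<ge> 1"
  shows "fin_conn_graph {0,1} (banana k)"
proof -
  have "(0::nat, 1::nat) \<in> {(a, b). banana k a b > 0}\<^sup>*"
    and "(1::nat, 0::nat) \<in> {(a, b). banana k a b > 0}\<^sup>*"
    using assms by (auto simp: banana_def)
  then show ?thesis
    unfolding fin_conn_graph_def by (auto simp: banana_def split: if_splits)
qed

lemma RK_banana_iff:
  "f \<in> RK {0,1} (banana k) m \<longleftrightarrow> int k * \<bar>f 1 - f 0\<bar> \<le> int m * (int k - 2)"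
proof -
  have "canon {0,1} (banana k) 0 = int k - 2" "canon {0,1} (banana k) 1 = int k - 2"
    by (simp_all add: canon_def val_def banana_def insert_Diff_if)
  moreover have "ord {0,1} (banana k) f 0 = int k * (f 1 - f 0)"
    "ord {0,1} (banana k) f 1 = int k * (f 0 - f 1)"
    by (simp_all add: ord_def banana_def)
  ultimately have "f \<in> RK {0,1} (banana k) m \<longleftrightarrow>
      int k * (f 1 - f 0) \<le> int m * (int k - 2) \<and> int k * (f 0 - f 1) \<le> int m * (int k - 2)"
    unfolding RK_def RR_def by (auto simp: right_diff_distrib)
  also have "\<dots> \<longleftrightarrow> \<bar>int k * (f 1 - f 0)\<bar> \<le> int m * (int k - 2)"
    by (auto simp: algebra_simps)
  finally show ?thesis
    by (simp add: abs_mult)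
qed

lemma generates_difference_le_monomial:
  assumes "generates V mult S" "h \<in> RK V mult m" "x \<in> V" "y \<in> V"
  obtains gs where "set gs \<subseteq> S" "sum_list (map fst gs) = m"
    "h x - h y \<le> (\<Sum>g\<leftarrow>gs. snd g x - snd g y)"
proof -
  obtain ts :: "(int \<times> (nat \<times> (nat \<Rightarrow> int)) list) list" where
    "ts \<noteq> []" and
    ts_in: "\<forall>t\<in>set ts. set (snd t) \<subseteq> S \<and> sum_list (map fst (snd t)) = m" and
    h_eq: "\<forall>z\<in>V. h z = Max ((\<lambda>t. fst t + (\<Sum>g\<leftarrow>snd t. snd g z)) ` set ts)"
    using assms(1,2) unfolding generates_def by blast
  define F :: "nat \<Rightarrow> int \<times> (nat \<times> (nat \<Rightarrow> int)) list \<Rightarrow> int"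
    where "F z t = fst t + (\<Sum>g\<leftarrow>snd t. snd g z)" for z t
  have "Max (F x ` set ts) \<in> F x ` set ts"
    using \<open>ts \<noteq> []\<close> by (intro Max_in) auto
  then obtain t where "t \<in> set ts" and "h x = F x t"
    using h_eq assms(3) by (auto simp: F_def)
  moreover have "F y t \<le> h y"
    using h_eq assms(4) \<open>t \<in> set ts\<close> by (simp add: F_def)
  ultimately have "h x - h y \<le> (\<Sum>g\<leftarrow>snd t. snd g x - snd g y)"
    by (simp add: F_def sum_list_subtractf)
  with \<open>t \<in> set ts\<close> ts_in show thesis
    using that by blast
qed

lemma low_degree_slope_bound:
  fixes n m :: nat and d :: int
  assumes "n \<ge> 1" "m \<le> n - 1" "int n * \<bar>d\<bar> \<le> int m * (int n - 1)"
  shows "(int n - 1) * d \<le> (int n - 2) * int m"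
proof (cases "m = 0")
  case True
  then have "d = 0"
    using assms(1,3) by (simp add: mult_le_0_iff)
  then show ?thesis
    using True by simp
next
  case False
  have "int n * d \<le> int m * (int n - 1)"
    using assms(3) abs_ge_self[of d] assms(1) by (meson mult_left_mono of_nat_0_le_iff order_trans)
  also have "\<dots> < int n * int m"
    using False by (simp add: algebra_simps)
  finally have "d \<le> int m - 1"
    using mult_less_cancel_left_pos[of "int n"] assms(1) by simp
  then have "(int n - 1) * d \<le> (int n - 1) * (int m - 1)"
    using assms(1) by (simp add: mult_left_mono)
  also have "\<dots> \<le> (int n - 2) * int m"
    using assms(1,2) by (simp add: algebra_simps)
  finally show ?thesis .
qed

lemma low_degree_product_slope_bound:
  assumes "n \<ge> 1"
    and "set gs \<subseteq> {(m, f). m \<le> n - 1 \<and> f \<in> RK {0,1} (banana (2 * n)) m}"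
  shows "(int n - 1) * (\<Sum>g\<leftarrow>gs. snd g 1 - snd g 0) \<le> (int n - 2) * int (\<Sum>g\<leftarrow>gs. fst g)"
proof -
  have "(int n - 1) * (snd g 1 - snd g 0) \<le> (int n - 2) * int (fst g)" if "g \<in> set gs" for g
  proof -
    have "fst g \<le> n - 1" "snd g \<in> RK {0,1} (banana (2 * n)) (fst g)"
      using that assms(2) by auto
    then show ?thesis
      using low_degree_slope_bound[OF assms(1), of "fst g" "snd g 1 - snd g 0"]
      unfolding RK_banana_iff by (simp add: algebra_simps)
  qed
  then have "(\<Sum>g\<leftarrow>gs. (int n - 1) * (snd g 1 - snd g 0)) \<le> (\<Sum>g\<leftarrow>gs. (int n - 2) * int (fst g))"
    by (rule sum_list_mono)
  then show ?thesis
    by (simp add: sum_list_const_mult comp_def flip: sum_list_of_nat)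
qed

theorem theorem3p6:
  fixes n :: nat
  assumes "n \<ge> 1"
  shows "\<exists>V mult. fin_conn_graph V mult \<and>
           \<not> generates V mult {(m, f). m \<le> n - 1 \<and> f \<in> RK V mult m}"
proof (intro exI conjI)
  show "fin_conn_graph {0,1} (banana (2 * n))"
    using assms by (intro fin_conn_graph_banana) simp
  show "\<not> generates {0,1} (banana (2 * n)) {(m, f). m \<le> n - 1 \<and> f \<in> RK {0,1} (banana (2 * n)) m}"
  proof
    assume "generates {0,1} (banana (2 * n)) {(m, f). m \<le> n - 1 \<and> f \<in> RK {0,1} (banana (2 * n)) m}"
    moreover define h :: "nat \<Rightarrow> int" where "h x = (if x = 1 then int n - 1 else 0)" for x
    moreover have "h \<in> RK {0,1} (banana (2 * n)) n"
      unfolding RK_banana_iff using assms by (simp add: h_def algebra_simps)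
    ultimately obtain gs where
      gs: "set gs \<subseteq> {(m, f). m \<le> n - 1 \<and> f \<in> RK {0,1} (banana (2 * n)) m}"
        "sum_list (map fst gs) = n" and
      slope: "int n - 1 \<le> (\<Sum>g\<leftarrow>gs. snd g 1 - snd g 0)"
      by (auto simp: h_def elim: generates_difference_le_monomial)
    have "(int n - 1) * (int n - 1) \<le> (int n - 1) * (\<Sum>g\<leftarrow>gs. snd g 1 - snd g 0)"
      using slope assms by (simp add: mult_left_mono)
    also have "\<dots> \<le> (int n - 2) * int n"
      using low_degree_product_slope_bound[OF assms gs(1)] gs(2) by simp
    finally show False
      by (simp add: algebra_simps)
  qed
qed

end
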